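(* Let $\Gamma$ act ergodically by measure preserving maps on a probability space $(X,\mu)$. Let $S$ be a finite symmetric generating set of $\Gamma$, let $H$ be a subgroup of $\Gamma$ of index $k$, let $C$ be a right coset representative system for $H$ in $\Gamma$ and let $T=N(S,C)$. Then for every measurable $A\subseteq X$ with $0<\mu(A)\le 1/(2k)$, $$\frac{\mu(AT\setminus A)}{\mu(A)}\ge\frac{\mathrm{h}(X,S)}{k}.$$
   Context: Actions are right actions; $AS=\{as: a\in A, s\in S\}$. Cheeger constant: $\mathrm{h}(X,S)=\inf\{\mu(AS\setminus A)/\mu(A): 0<\mu(A)\le1/2\}$. Nielsen–Schreier set: for $s\in S$, $c\in C$ let $p_{c,s}\in C$ be the unique element with $csp_{c,s}^{-1}\in H$; $N(S,C)=\{csp_{c,s}^{-1}: s\in S, c\in C\}$. *)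

theory Defs
  imports "HOL-Probability.Probability" "HOL-Algebra.Coset" "HOL-Algebra.Generated_Groups"
begin

definition right_mp_action :: "('g, 'b) monoid_scheme \<Rightarrow> 'x measure \<Rightarrow> ('x \<Rightarrow> 'g \<Rightarrow> 'x) \<Rightarrow> bool" where
  "right_mp_action G M act \<longleftrightarrow>
     (\<forall>x\<in>space M. \<forall>g\<in>carrier G. act x g \<in> space M) \<and>
     (\<forall>x\<in>space M. act x \<one>\<^bsub>G\<^esub> = x) \<and>
     (\<forall>x\<in>space M. \<forall>g\<in>carrier G. \<forall>h\<in>carrier G. act (act x g) h = act x (g \<otimes>\<^bsub>G\<^esub> h)) \<and>
     (\<forall>g\<in>carrier G. (\<lambda>x. act x g) \<in> measurable M M \<and>
        (\<forall>A\<in>sets M. emeasure M ((\<lambda>x. act x g) -` A \<inter> space M) = emeasure M A))"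

definition set_act :: "('x \<Rightarrow> 'g \<Rightarrow> 'x) \<Rightarrow> 'x set \<Rightarrow> 'g set \<Rightarrow> 'x set" where
  "set_act act A T = {act a t | a t. a \<in> A \<and> t \<in> T}"

definition ergodic_action :: "('g, 'b) monoid_scheme \<Rightarrow> 'x measure \<Rightarrow> ('x \<Rightarrow> 'g \<Rightarrow> 'x) \<Rightarrow> bool" where
  "ergodic_action G M act \<longleftrightarrow>
     (\<forall>A\<in>sets M. (\<forall>g\<in>carrier G. set_act act A {g} = A) \<longrightarrow> measure M A = 0 \<or> measure M A = 1)"

definition cheeger :: "'x measure \<Rightarrow> ('x \<Rightarrow> 'g \<Rightarrow> 'x) \<Rightarrow> 'g set \<Rightarrow> real" where
  "cheeger M act S = Inf {measure M (set_act act A S - A) / measure M A | A.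
       A \<in> sets M \<and> 0 < measure M A \<and> measure M A \<le> 1/2}"

definition right_transversal :: "('g, 'b) monoid_scheme \<Rightarrow> 'g set \<Rightarrow> 'g set \<Rightarrow> bool" where
  "right_transversal G H C \<longleftrightarrow> C \<subseteq> carrier G \<and>
     (\<forall>g\<in>carrier G. \<exists>!c. c \<in> C \<and> H #>\<^bsub>G\<^esub> c = H #>\<^bsub>G\<^esub> g)"

definition ns_p :: "('g, 'b) monoid_scheme \<Rightarrow> 'g set \<Rightarrow> 'g set \<Rightarrow> 'g \<Rightarrow> 'g \<Rightarrow> 'g" where
  "ns_p G H C c s = (THE p. p \<in> C \<and> c \<otimes>\<^bsub>G\<^esub> s \<otimes>\<^bsub>G\<^esub> inv\<^bsub>G\<^esub> p \<in> H)"

definition NS_set :: "('g, 'b) monoid_scheme \<Rightarrow> 'g set \<Rightarrow> 'g set \<Rightarrow> 'g set \<Rightarrow> 'g set" where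
  "NS_set G H S C = {c \<otimes>\<^bsub>G\<^esub> s \<otimes>\<^bsub>G\<^esub> inv\<^bsub>G\<^esub> (ns_p G H C c s) | s c. s \<in> S \<and> c \<in> C}"

end

theory Submission
  imports Defs
begin

text \<open>
  Given A with 0 < mu(A) <= 1/(2k), spread it over the transversal:
  B = A C.  Since C has at most k elements and the action is measure preserving,
  mu(A) <= mu(B) <= k mu(A) <= 1/2, so B is admissible in the definition of the
  Cheeger constant and h mu(A) <= h mu(B) <= mu(B S - B).  The combinatorial core is
  the inclusion  B S - B  in  D C,  where D = A T - A and T = N(S,C): a point a c s
  of B S equals (a t) p with t = c s p^-1 in T and p = p_{c,s} in C, and if it lies
  outside B then a t lies outside A.  Hence mu(B S - B) <= k mu(D), and dividing
  by k mu(A) gives the theorem.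
\<close>

lemma set_act_UN: "set_act act A T = (\<Union>t\<in>T. set_act act A {t})"
  unfolding set_act_def by blast

lemma set_act_single_eq_vimage:
  fixes G (structure)
  assumes G: "group G" and R: "right_mp_action G M act"
    and g: "g \<in> carrier G" and A: "A \<subseteq> space M"
  shows "set_act act A {g} = (\<lambda>x. act x (inv g)) -` A \<inter> space M"
proof -
  interpret group G by fact
  from R have sp: "\<And>x g. x \<in> space M \<Longrightarrow> g \<in> carrier G \<Longrightarrow> act x g \<in> space M"
    and one: "\<And>x. x \<in> space M \<Longrightarrow> act x \<one> = x"
    and mul: "\<And>x g h. x \<in> space M \<Longrightarrow> g \<in> carrier G \<Longrightarrow> h \<in> carrier G \<Longrightarrow>
                act (act x g) h = act x (g \<otimes> h)"
    unfolding right_mp_action_def by blast+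
  show ?thesis
  proof (intro equalityI subsetI)
    fix y assume "y \<in> set_act act A {g}"
    then obtain a where a: "a \<in> A" "y = act a g" unfolding set_act_def by blast
    with A have "a \<in> space M" by blast
    moreover have "act y (inv g) = a" using a \<open>a \<in> space M\<close> g by (simp add: mul one)
    ultimately show "y \<in> (\<lambda>x. act x (inv g)) -` A \<inter> space M" using a g sp by auto
  next
    fix y assume y: "y \<in> (\<lambda>x. act x (inv g)) -` A \<inter> space M"
    hence "act (act y (inv g)) g = y" using g by (simp add: mul one)
    thus "y \<in> set_act act A {g}" using y unfolding set_act_def by force
  qed
qed

lemma set_act_single:
  fixes G (structure)
  assumes G: "group G" and R: "right_mp_action G M act"
    and g: "g \<in> carrier G" and A: "A \<in> sets M"
  shows "set_act act A {g} \<in> sets M" and "measure M (set_act act A {g}) = measure M A"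
proof -
  interpret group G by fact
  have "inv g \<in> carrier G" using g by simp
  then have m: "(\<lambda>x. act x (inv g)) \<in> measurable M M"
    and e: "emeasure M ((\<lambda>x. act x (inv g)) -` A \<inter> space M) = emeasure M A"
    using R A unfolding right_mp_action_def by blast+
  have eq: "set_act act A {g} = (\<lambda>x. act x (inv g)) -` A \<inter> space M"
    using set_act_single_eq_vimage[OF G R g] sets.sets_into_space[OF A] by blast
  show "set_act act A {g} \<in> sets M" using eq measurable_sets[OF m A] by simp
  show "measure M (set_act act A {g}) = measure M A" using eq e by (simp add: measure_def)
qed

lemma set_act_finite:
  fixes G (structure)
  assumes G: "group G" and R: "right_mp_action G M act" and P: "prob_space M"
    and T: "finite T" "T \<subseteq> carrier G" and A: "A \<in> sets M"
  shows "set_act act A T \<in> sets M"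
    and "measure M (set_act act A T) \<le> real (card T) * measure M A"
    and "T \<noteq> {} \<Longrightarrow> measure M A \<le> measure M (set_act act A T)"
proof -
  interpret prob_space M by fact
  have single: "\<And>t. t \<in> T \<Longrightarrow> set_act act A {t} \<in> sets M \<and>
                      measure M (set_act act A {t}) = measure M A"
    using set_act_single[OF G R _ A] T by blast
  show meas: "set_act act A T \<in> sets M"
    unfolding set_act_UN[of act A T] using T single by blast
  have "measure M (set_act act A T) \<le> (\<Sum>t\<in>T. measure M (set_act act A {t}))"
    unfolding set_act_UN[of act A T] by (rule measure_UNION_le) (use T single in auto)
  also have "\<dots> = real (card T) * measure M A" using single by simp
  finally show "measure M (set_act act A T) \<le> real (card T) * measure M A" .
  assume "T \<noteq> {}"
  then obtain t where t: "t \<in> T" by blast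
  have "set_act act A {t} \<subseteq> set_act act A T" unfolding set_act_def using t by blast
  then have "measure M (set_act act A {t}) \<le> measure M (set_act act A T)"
    using meas by (intro finite_measure_mono) auto
  thus "measure M A \<le> measure M (set_act act A T)" using single[OF t] by simp
qed

lemma mult_inv_mem_iff_rcos_eq:
  fixes G (structure)
  assumes G: "group G" and H: "subgroup H G" and g: "g \<in> carrier G" and p: "p \<in> carrier G"
  shows "g \<otimes> inv p \<in> H \<longleftrightarrow> H #> p = H #> g"
proof -
  interpret group G by fact
  interpret subgroup H G by fact
  have "g \<otimes> inv p \<in> H \<longleftrightarrow> g \<in> H #> p" using rcos_module[OF G p g] by simp
  also have "\<dots> \<longleftrightarrow> H #> p = H #> g"
    using repr_independence[OF _ p H] rcos_self[OF g H] by metis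
  finally show ?thesis .
qed

text \<open>A right transversal of a subgroup of finite index k is a finite nonempty set
  of at most k elements (in fact exactly k, but the bound suffices); hence k > 0.\<close>
lemma right_transversal_finite:
  fixes G (structure)
  assumes G: "group G" and H: "subgroup H G" and Tr: "right_transversal G H C"
    and fin: "finite (rcosets H)"
  shows "finite C" and "card C \<le> card (rcosets H)" and "C \<noteq> {}"
    and "0 < card (rcosets H)"
proof -
  interpret group G by fact
  have CG: "C \<subseteq> carrier G" using Tr unfolding right_transversal_def by blast
  have inj: "inj_on (\<lambda>c. H #> c) C"
  proof (rule inj_onI)
    fix c d assume cd: "c \<in> C" "d \<in> C" "H #> c = H #> d"
    with CG Tr have "\<exists>!q. q \<in> C \<and> H #> q = H #> d"
      unfolding right_transversal_def by blast
    with cd show "c = d" by blast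
  qed
  have img: "(\<lambda>c. H #> c) ` C \<subseteq> rcosets H"
    using CG subgroup.subset[OF H] by (auto intro: rcosetsI)
  show "finite C" using inj img fin finite_imageD finite_subset by blast
  show "card C \<le> card (rcosets H)" using card_inj_on_le[OF inj img fin] .
  show "C \<noteq> {}" using Tr one_closed unfolding right_transversal_def by blast
  then show "0 < card (rcosets H)"
    using \<open>finite C\<close> \<open>card C \<le> card (rcosets H)\<close> card_gt_0_iff by fastforce
qed

lemma ns_p_prop:
  fixes G (structure)
  assumes G: "group G" and H: "subgroup H G" and Tr: "right_transversal G H C"
    and c: "c \<in> carrier G" and s: "s \<in> carrier G"
  shows "ns_p G H C c s \<in> C \<and> c \<otimes> s \<otimes> inv (ns_p G H C c s) \<in> H"
proof -
  interpret group G by fact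
  have cs: "c \<otimes> s \<in> carrier G" using c s by simp
  have CG: "C \<subseteq> carrier G" using Tr unfolding right_transversal_def by blast
  have "\<exists>!q. q \<in> C \<and> H #> q = H #> (c \<otimes> s)"
    using Tr cs unfolding right_transversal_def by blast
  moreover have "\<And>q. q \<in> C \<Longrightarrow> c \<otimes> s \<otimes> inv q \<in> H \<longleftrightarrow> H #> q = H #> (c \<otimes> s)"
    using mult_inv_mem_iff_rcos_eq[OF G H cs] CG by blast
  ultimately have "\<exists>!q. q \<in> C \<and> c \<otimes> s \<otimes> inv q \<in> H" by metis
  thus ?thesis unfolding ns_p_def by (rule theI')
qed

lemma NS_set_finite:
  fixes G (structure)
  assumes G: "group G" and H: "subgroup H G" and Tr: "right_transversal G H C"
    and S: "finite S" "S \<subseteq> carrier G" and C: "finite C"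
  shows "finite (NS_set G H S C)" and "NS_set G H S C \<subseteq> carrier G"
proof -
  interpret group G by fact
  have "NS_set G H S C = (\<lambda>(s, c). c \<otimes> s \<otimes> inv (ns_p G H C c s)) ` (S \<times> C)"
    unfolding NS_set_def by auto
  thus "finite (NS_set G H S C)" using S C by simp
  have CG: "C \<subseteq> carrier G" using Tr unfolding right_transversal_def by blast
  show "NS_set G H S C \<subseteq> carrier G"
    unfolding NS_set_def using ns_p_prop[OF G H Tr] CG S by blast
qed

lemma boundary_of_transversal_translate:
  fixes G (structure)
  assumes G: "group G" and R: "right_mp_action G M act"
    and H: "subgroup H G" and Tr: "right_transversal G H C"
    and S: "S \<subseteq> carrier G" and A: "A \<subseteq> space M"
  shows "set_act act (set_act act A C) S - set_act act A C
           \<subseteq> set_act act (set_act act A (NS_set G H S C) - A) C"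
proof
  interpret group G by fact
  have CG: "C \<subseteq> carrier G" using Tr unfolding right_transversal_def by blast
  have mul: "\<And>x g h. x \<in> space M \<Longrightarrow> g \<in> carrier G \<Longrightarrow> h \<in> carrier G \<Longrightarrow>
                act (act x g) h = act x (g \<otimes> h)"
    using R unfolding right_mp_action_def by blast
  fix x assume x: "x \<in> set_act act (set_act act A C) S - set_act act A C"
  then obtain a c s where acs: "a \<in> A" "c \<in> C" "s \<in> S" "x = act (act a c) s"
    unfolding set_act_def by blast
  define p where "p = ns_p G H C c s"
  define t where "t = c \<otimes> s \<otimes> inv p"
  have p: "p \<in> C" and "t \<in> H"
    using ns_p_prop[OF G H Tr] acs CG S unfolding p_def t_def by auto
  have t: "t \<in> NS_set G H S C" unfolding NS_set_def t_def p_def using acs by blast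
  have carr: "c \<in> carrier G" "s \<in> carrier G" "p \<in> carrier G" "t \<in> carrier G"
    using acs p CG S unfolding t_def by auto
  have "a \<in> space M" using acs A by blast
  have "x = act a (c \<otimes> s)" using acs mul[OF \<open>a \<in> space M\<close>] carr by simp
  also have "c \<otimes> s = t \<otimes> p" unfolding t_def using carr by (simp add: m_assoc)
  also have "act a (t \<otimes> p) = act (act a t) p" using mul[OF \<open>a \<in> space M\<close>] carr by simp
  finally have x_eq: "x = act (act a t) p" .
  have "act a t \<notin> A"
  proof
    assume "act a t \<in> A"
    hence "x \<in> set_act act A C" unfolding set_act_def using x_eq p by blast
    thus False using x by blast
  qed
  moreover have "act a t \<in> set_act act A (NS_set G H S C)"
    unfolding set_act_def using acs t by blast
  ultimately show "x \<in> set_act act (set_act act A (NS_set G H S C) - A) C"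
    unfolding set_act_def using x_eq p by blast
qed

lemma cheeger_bound:
  assumes B: "B \<in> sets M" "0 < measure M B" "measure M B \<le> 1/2"
  shows "0 \<le> cheeger M act S"
    and "cheeger M act S * measure M B \<le> measure M (set_act act B S - B)"
proof -
  define Q where "Q = {measure M (set_act act A S - A) / measure M A | A.
       A \<in> sets M \<and> 0 < measure M A \<and> measure M A \<le> 1/2}"
  have h: "cheeger M act S = Inf Q" unfolding cheeger_def Q_def by simp
  have inQ: "measure M (set_act act B S - B) / measure M B \<in> Q"
    unfolding Q_def using B by blast
  have nonneg: "\<And>q. q \<in> Q \<Longrightarrow> 0 \<le> q" unfolding Q_def by auto
  show "0 \<le> cheeger M act S" unfolding h using inQ nonneg by (intro cInf_greatest) auto
  have "cheeger M act S \<le> measure M (set_act act B S - B) / measure M B"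
    unfolding h using cInf_lower[OF inQ] nonneg by (meson bdd_belowI)
  thus "cheeger M act S * measure M B \<le> measure M (set_act act B S - B)"
    using B by (simp add: pos_le_divide_eq)
qed

lemma cheeger_mult_bound:
  fixes G (structure)
  assumes G: "group G" and P: "prob_space M" and R: "right_mp_action G M act"
    and S: "finite S" "S \<subseteq> carrier G" and H: "subgroup H G"
    and fin: "finite (rcosets H)" and Tr: "right_transversal G H C"
    and A: "A \<in> sets M" "0 < measure M A" "measure M A \<le> 1 / (2 * real (card (rcosets H)))"
  shows "cheeger M act S * measure M A
           \<le> real (card (rcosets H)) * measure M (set_act act A (NS_set G H S C) - A)"
proof -
  interpret prob_space M by fact
  let ?k = "real (card (rcosets H))" and ?T = "NS_set G H S C"
  define B where "B = set_act act A C"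
  define D where "D = set_act act A ?T - A"
  have CG: "C \<subseteq> carrier G" using Tr unfolding right_transversal_def by blast
  note C = right_transversal_finite[OF G H Tr fin]
  have k: "?k > 0" using C(4) by simp
  note AC = set_act_finite[OF G R P C(1) CG A(1), folded B_def]
  have D: "D \<in> sets M"
    unfolding D_def using set_act_finite(1)[OF G R P NS_set_finite[OF G H Tr S C(1)] A(1)] A(1)
    by blast
  have "measure M B \<le> ?k * measure M A"
    using AC(2) C(2) A(2) by (meson less_imp_le mult_right_mono of_nat_mono order_trans)
  also have "\<dots> \<le> 1/2" using A(3) k by (simp add: field_simps)
  finally have B_half: "measure M B \<le> 1/2" .
  have A_le_B: "measure M A \<le> measure M B" using AC(3) C(3) .
  note h = cheeger_bound[OF AC(1) _ B_half, of act S]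
  have "cheeger M act S * measure M A \<le> cheeger M act S * measure M B"
    using A_le_B A(2) h(1) by (simp add: mult_left_mono)
  also have "\<dots> \<le> measure M (set_act act B S - B)" using A_le_B A(2) h(2) by simp
  also have "\<dots> \<le> measure M (set_act act D C)"
    using boundary_of_transversal_translate[OF G R H Tr S(2) sets.sets_into_space[OF A(1)]]
      set_act_finite(1)[OF G R P C(1) CG D]
    unfolding B_def D_def by (intro finite_measure_mono) auto
  also have "\<dots> \<le> real (card C) * measure M D" using set_act_finite(2)[OF G R P C(1) CG D] .
  also have "\<dots> \<le> ?k * measure M D" using C(2) by (simp add: mult_right_mono)
  finally show ?thesis unfolding D_def .
qed

theorem mainTheorem14:
  fixes G :: "('g, 'b) monoid_scheme" and M :: "'x measure" and act :: "'x \<Rightarrow> 'g \<Rightarrow> 'x"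
    and S H C :: "'g set" and k :: nat
  assumes "group G"
    and "prob_space M"
    and "right_mp_action G M act"
    and "ergodic_action G M act"
    and "finite S" and "S \<subseteq> carrier G" and "\<forall>s\<in>S. inv\<^bsub>G\<^esub> s \<in> S"
    and "generate G S = carrier G"
    and "subgroup H G"
    and "finite (rcosets\<^bsub>G\<^esub> H)" and "card (rcosets\<^bsub>G\<^esub> H) = k"
    and "right_transversal G H C"
  shows "\<forall>A\<in>sets M. 0 < measure M A \<and> measure M A \<le> 1 / (2 * real k) \<longrightarrow>
           measure M (set_act act A (NS_set G H S C) - A) / measure M A \<ge> cheeger M act S / real k"
proof (intro ballI impI)
  fix A assume A: "A \<in> sets M" "0 < measure M A \<and> measure M A \<le> 1 / (2 * real k)"
  have k: "real k > 0"
    using right_transversal_finite(4)[OF assms(1,9,12,10)] assms(11) by simp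
  have "cheeger M act S * measure M A \<le> real k * measure M (set_act act A (NS_set G H S C) - A)"
    using cheeger_mult_bound[OF assms(1,2,3,5,6,9,10,12)] A assms(11) by blast
  with k A(2) show "cheeger M act S / real k
                      \<le> measure M (set_act act A (NS_set G H S C) - A) / measure M A"
    by (simp add: divide_simps mult.commute)
qed

end
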